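(* Let $G$ be a finite simple bipartite graph of order $n$ whose adjacency matrix $A(G)$ is non-singular, and suppose $G$ is not isomorphic to the path $P_4$. Then $\mathcal{E}(G)\geq n-1+\bar{d}$.
   Context: For a finite simple graph $G$ with $n$ vertices and $m$ edges, $A(G)$ is its adjacency matrix, $\lambda_1\ge\cdots\ge\lambda_n$ its eigenvalues, and the energy is $\mathcal{E}(G)=\sum_{i=1}^n|\lambda_i|$. $G$ is called non-singular if $A(G)$ is non-singular. $\bar d = 2m/n$ is the average degree. $P_4$ denotes the path on 4 vertices. *)

theory Defs
  imports "Jordan_Normal_Form.Char_Poly"
begin

definition simple_graph :: "nat \<Rightarrow> (nat \<Rightarrow> nat \<Rightarrow> bool) \<Rightarrow> bool" where
  "simple_graph n E \<longleftrightarrow> (\<forall>i j. E i j \<longrightarrow> i < n \<and> j < n) \<and> (\<forall>i j. E i j \<longrightarrow> E j i) \<and> (\<forall>i. \<not> E i i)"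

definition bipartite :: "nat \<Rightarrow> (nat \<Rightarrow> nat \<Rightarrow> bool) \<Rightarrow> bool" where
  "bipartite n E \<longleftrightarrow> (\<exists>X. X \<subseteq> {0..<n} \<and> (\<forall>i j. E i j \<longrightarrow> (i \<in> X \<longleftrightarrow> j \<notin> X)))"

definition num_edges :: "nat \<Rightarrow> (nat \<Rightarrow> nat \<Rightarrow> bool) \<Rightarrow> nat" where
  "num_edges n E = card {(i, j). i < j \<and> j < n \<and> E i j}"

definition avg_degree :: "nat \<Rightarrow> (nat \<Rightarrow> nat \<Rightarrow> bool) \<Rightarrow> real" where
  "avg_degree n E = 2 * real (num_edges n E) / real n"

definition adj_mat :: "nat \<Rightarrow> (nat \<Rightarrow> nat \<Rightarrow> bool) \<Rightarrow> real mat" where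
  "adj_mat n E = mat n n (\<lambda>(i, j). if E i j then 1 else 0)"

definition energy :: "nat \<Rightarrow> (nat \<Rightarrow> nat \<Rightarrow> bool) \<Rightarrow> real" where
  "energy n E = (\<Sum>x \<in># proots (char_poly (map_mat complex_of_real (adj_mat n E))). cmod x)"

definition P4_edge :: "nat \<Rightarrow> nat \<Rightarrow> bool" where
  "P4_edge i j \<longleftrightarrow> i < 4 \<and> j < 4 \<and> (i = j + 1 \<or> j = i + 1)"

definition isomorphic :: "nat \<Rightarrow> (nat \<Rightarrow> nat \<Rightarrow> bool) \<Rightarrow> nat \<Rightarrow> (nat \<Rightarrow> nat \<Rightarrow> bool) \<Rightarrow> bool" where
  "isomorphic n E n' E' \<longleftrightarrow> (\<exists>f. bij_betw f {0..<n} {0..<n'} \<and>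
      (\<forall>i\<in>{0..<n}. \<forall>j\<in>{0..<n}. E i j \<longleftrightarrow> E' (f i) (f j)))"

end

theory Submission
  imports Defs "Jordan_Normal_Form.Schur_Decomposition"
begin

text \<open>A non-singular bipartite graph has a perfect matching (a nonzero term of the Leibniz
  expansion of \<open>det A\<close>), so both sides have \<open>k = n/2\<close> vertices; two vertices of one side
  adjacent to the whole other side would give equal rows of \<open>A\<close>, hence \<open>m \<le> k(k - 1) + 1\<close>.
  The spectrum is real and symmetric about \<open>0\<close>, its squares sum to \<open>tr A\<^sup>2 = 2m\<close>, and the
  product of the absolute eigenvalues is \<open>\<bar>det A\<bar> \<ge> 1\<close> because \<open>det A\<close> is a nonzero integer.
  If \<open>2m \<le> n\<close>, AM-GM already gives \<open>\<E> \<ge> n\<close>. Otherwise \<open>k \<ge> 3\<close>, since for \<open>k = 2\<close> the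
  bound forces \<open>m = 3\<close> and \<open>G = P\<^sub>4\<close>. One then shows \<open>psi n y \<ge> 0\<close> for every absolute
  eigenvalue \<open>y\<close>: for \<open>k \<ge> 4\<close> because \<open>y \<le> k = n/2\<close>, and for \<open>k = 3\<close> because the pair
  \<open>\<plusminus>y\<close> together with the tangent-line bound on the other four eigenvalues forces
  \<open>y \<le> 5/2\<close>. Summing \<open>psi n\<close> over the spectrum gives the claim.\<close>

section \<open>Inequalities for multisets of positive reals\<close>

lemma prod_mset_pos:
  fixes Y :: "real multiset"
  assumes "\<forall>y\<in>#Y. 0 < y"
  shows "0 < prod_mset Y"
  using assms by (induction Y) auto

lemma ln_prod_mset:
  fixes Y :: "real multiset"
  assumes "\<forall>y\<in>#Y. 0 < y"
  shows "ln (prod_mset Y) = (\<Sum>y\<in>#Y. ln y)"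
  using assms
proof (induction Y)
  case (add y Y)
  then have "0 < y" "0 < prod_mset Y" by (auto intro: prod_mset_pos)
  then have "ln (y * prod_mset Y) = ln y + ln (prod_mset Y)" by (rule ln_mult_pos)
  with add show ?case by simp
qed simp

lemma size_plus_ln_prod_mset_le_sum_mset:
  fixes Y :: "real multiset"
  assumes "\<forall>y\<in>#Y. 0 < y"
  shows "size Y + ln (prod_mset Y) \<le> sum_mset Y"
proof -
  have "(\<Sum>y\<in>#Y. 1 + ln y) \<le> (\<Sum>y\<in>#Y. y)"
    using assms ln_le_minus_one by (intro sum_mset_mono) force
  then show ?thesis
    by (simp add: ln_prod_mset[OF assms] sum_mset.distrib)
qed

lemma size_le_sum_mset_if_prod_ge_1:
  fixes Y :: "real multiset"
  assumes "\<forall>y\<in>#Y. 0 < y" and "1 \<le> prod_mset Y"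
  shows "size Y \<le> sum_mset Y"
  using size_plus_ln_prod_mset_le_sum_mset[OF assms(1)] ln_ge_zero[OF assms(2)] by linarith

text \<open>Summed form of the tangent-line bound \<open>ln (L z\<^sup>2) \<le> L z\<^sup>2 - 1\<close>.\<close>
lemma sum_squares_tangent_bound:
  fixes Z :: "real multiset" and L :: real
  assumes "0 < L" and "\<forall>z\<in>#Z. 0 < z"
  shows "size Z * (1 + ln L) + 2 * ln (prod_mset Z) \<le> L * (\<Sum>z\<in>#Z. z\<^sup>2)"
proof -
  have "size Z * (1 + ln L) + 2 * ln (prod_mset Z) = (\<Sum>z\<in>#Z. 1 + ln L + 2 * ln z)"
    by (simp add: ln_prod_mset[OF assms(2)] sum_mset.distrib sum_mset_distrib_left multiset.map_comp
        o_def)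
  also have "\<dots> \<le> (\<Sum>z\<in>#Z. L * z\<^sup>2)"
  proof (rule sum_mset_mono)
    fix z assume "z \<in># Z"
    then have "0 < z" using assms(2) by blast
    then have "ln (L * z\<^sup>2) = ln L + 2 * ln z" using assms(1) by (simp add: ln_mult ln_realpow)
    moreover have "ln (L * z\<^sup>2) \<le> L * z\<^sup>2 - 1" using assms(1) \<open>0 < z\<close> by (intro ln_le_minus_one) simp
    ultimately show "1 + ln L + 2 * ln z \<le> L * z\<^sup>2" by linarith
  qed
  finally show ?thesis by (simp add: sum_mset_distrib_left multiset.map_comp o_def)
qed

lemma sum_mset_squares_ge_pair:
  fixes Y :: "real multiset"
  assumes "{#y, y#} \<subseteq># Y"
  shows "2 * y\<^sup>2 \<le> (\<Sum>z\<in>#Y. z\<^sup>2)"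
proof -
  obtain R where Y: "Y = add_mset y (add_mset y R)"
    using assms by (auto simp: mset_subset_eq_exists_conv)
  have "0 \<le> (\<Sum>z\<in>#R. z\<^sup>2)" using sum_mset_mono[of R "\<lambda>_. 0" "\<lambda>z. z\<^sup>2"] by simp
  then show ?thesis unfolding Y by simp
qed

lemma paired_element_le_five_halves:
  fixes Y :: "real multiset"
  assumes pos: "\<forall>z\<in>#Y. 0 < z" and prod: "1 \<le> prod_mset Y" and size: "size Y = 6"
    and squares: "(\<Sum>z\<in>#Y. z\<^sup>2) \<le> 14" and pair: "{#y, y#} \<subseteq># Y"
  shows "y \<le> 5/2"
proof -
  obtain Z where Y: "Y = add_mset y (add_mset y Z)"
    using pair by (auto simp: mset_subset_eq_exists_conv)
  have "0 < y" and Z_pos: "\<forall>z\<in>#Z. 0 < z" using pos unfolding Y by auto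
  have "size Z = 4" using size unfolding Y by simp
  have "0 \<le> ln (y\<^sup>2 * prod_mset Z)" using prod unfolding Y by (simp add: power2_eq_square mult.assoc)
  also have "\<dots> = 2 * ln y + ln (prod_mset Z)"
    using \<open>0 < y\<close> prod_mset_pos[OF Z_pos] by (simp add: ln_mult_pos ln_realpow)
  finally have tangent: "4 \<le> y * (\<Sum>z\<in>#Z. z\<^sup>2)"
    using sum_squares_tangent_bound[OF \<open>0 < y\<close> Z_pos] \<open>size Z = 4\<close> by simp
  have "2 * y\<^sup>2 + (\<Sum>z\<in>#Z. z\<^sup>2) \<le> 14" using squares unfolding Y by simp
  then have "y * (2 * y\<^sup>2 + (\<Sum>z\<in>#Z. z\<^sup>2)) \<le> y * 14"
    using \<open>0 < y\<close> by (intro mult_left_mono) auto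
  with tangent have cubic: "2 * y ^ 3 + 4 \<le> 14 * y"
    by (simp add: algebra_simps power2_eq_square power3_eq_cube)
  show ?thesis
  proof (rule ccontr)
    assume "\<not> y \<le> 5/2"
    then have "0 < y - 5/2" and "0 < y\<^sup>2 + 5/2 * y - 3/4"
      using zero_le_power2[of y] by linarith+
    then have "0 < (y - 5/2) * (y\<^sup>2 + 5/2 * y - 3/4)" by (rule mult_pos_pos)
    also have "\<dots> = y ^ 3 - 7 * y + 15/8" by (simp add: field_simps power2_eq_square power3_eq_cube)
    finally show False using cubic by linarith
  qed
qed

text \<open>Summed over the absolute eigenvalues of a graph of order \<open>N\<close>, \<open>psi N\<close> gives
  \<open>\<E> - (N - 1) - d - (1 - 2/N) ln \<bar>det A\<bar>\<close>, where \<open>d\<close> is the average degree.\<close>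
definition psi :: "real \<Rightarrow> real \<Rightarrow> real" where
  "psi N x = x - x\<^sup>2 / N - (1 - 1/N) - (1 - 2/N) * ln x"

lemma psi_one [simp]: "psi N 1 = 0"
  by (simp add: psi_def)

lemma psi_has_derivative:
  assumes "0 < N" and "0 < x"
  shows "DERIV (psi N) x :> - 2 * ((x - 1) * (x - (N/2 - 1))) / (N * x)"
proof -
  have "DERIV (psi N) x :> 1 - 2 * x / N - (1 - 2/N) / x"
    unfolding psi_def using assms by (auto intro!: derivative_eq_intros simp: field_simps power2_eq_square)
  moreover have "1 - 2 * x / N - (1 - 2/N) / x = - 2 * ((x - 1) * (x - (N/2 - 1))) / (N * x)"
    using assms by (simp add: field_simps)
  ultimately show ?thesis by simp
qed

text \<open>For \<open>N \<ge> 4\<close>, \<open>psi N\<close> decreases on \<open>(0, 1]\<close> to its local minimum \<open>psi N 1 = 0\<close>, increases up to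
  \<open>N/2 - 1\<close> and decreases afterwards; so on \<open>(0, C]\<close> it is bounded below by \<open>min 0 (psi N C)\<close>.\<close>
lemma psi_nonneg:
  assumes "4 \<le> N" and "0 < x" and "x \<le> C" and "N/2 - 1 \<le> C" and "0 \<le> psi N C"
  shows "0 \<le> psi N x"
proof -
  let ?q = "\<lambda>t. (t - 1) * (t - (N/2 - 1))"
  have "0 < N" using assms(1) by simp
  have decreasing: "psi N b \<le> psi N a" if "0 < a" "a \<le> b" "\<And>t. a \<le> t \<Longrightarrow> t \<le> b \<Longrightarrow> 0 \<le> ?q t" for a b
  proof (rule DERIV_nonpos_imp_nonincreasing[OF \<open>a \<le> b\<close>])
    fix t assume "a \<le> t" "t \<le> b"
    with that have "0 < t" "0 \<le> ?q t" by auto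
    then have "0 \<le> 2 * ?q t / (N * t)" using \<open>0 < N\<close> by (intro divide_nonneg_pos) auto
    then show "\<exists>y. DERIV (psi N) t :> y \<and> y \<le> 0"
      using psi_has_derivative[OF \<open>0 < N\<close> \<open>0 < t\<close>] by (intro exI conjI) auto
  qed
  have increasing: "psi N a \<le> psi N b" if "0 < a" "a \<le> b" "\<And>t. a \<le> t \<Longrightarrow> t \<le> b \<Longrightarrow> ?q t \<le> 0" for a b
  proof (rule DERIV_nonneg_imp_nondecreasing[OF \<open>a \<le> b\<close>])
    fix t assume "a \<le> t" "t \<le> b"
    with that have "0 < t" "?q t \<le> 0" by auto
    then have "2 * ?q t / (N * t) \<le> 0" using \<open>0 < N\<close> by (intro divide_nonpos_pos) auto
    then show "\<exists>y. DERIV (psi N) t :> y \<and> 0 \<le> y"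
      using psi_has_derivative[OF \<open>0 < N\<close> \<open>0 < t\<close>] by (intro exI conjI) auto
  qed
  consider "x \<le> 1" | "1 \<le> x" "x \<le> N/2 - 1" | "N/2 - 1 \<le> x" by linarith
  then show ?thesis
  proof cases
    case 1
    with assms have "psi N 1 \<le> psi N x" by (intro decreasing) (auto intro!: mult_nonpos_nonpos)
    then show ?thesis by simp
  next
    case 2
    then have "psi N 1 \<le> psi N x" by (intro increasing) (auto intro!: mult_nonneg_nonpos)
    then show ?thesis by simp
  next
    case 3
    with assms have "psi N C \<le> psi N x" by (intro decreasing) (auto intro!: mult_nonneg_nonneg)
    with assms show ?thesis by simp
  qed
qed

lemma ln_4_le: "ln (4::real) \<le> 3/2"
proof -
  have "(1 + 3/4 + (3/4)\<^sup>2/2)\<^sup>2 \<le> exp (3/4::real) ^ 2"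
    using exp_lower_Taylor_quadratic[of "3/4"] by (intro power_mono) auto
  also have "exp (3/4::real) ^ 2 = exp (3/2)" by (simp add: exp_double[symmetric])
  finally have "4 \<le> exp (3/2::real)" by (simp add: power2_eq_square)
  then show ?thesis by (metis exp_le_cancel_iff exp_ln zero_less_numeral)
qed

lemma ln_5_halves_le: "ln (5/2::real) \<le> 15/16"
proof -
  have "(5/2::real) \<le> (1 + 5/16 + (5/16)\<^sup>2/2) ^ 3" by (simp add: power3_eq_cube power2_eq_square)
  also have "\<dots> \<le> exp (5/16::real) ^ 3"
    using exp_lower_Taylor_quadratic[of "5/16"] by (intro power_mono) auto
  also have "\<dots> = exp (15/16)" by (simp add: exp_of_nat_mult[symmetric])
  finally show ?thesis by (metis exp_le_cancel_iff exp_ln zero_less_divide_iff zero_less_numeral)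
qed

lemma psi_6_five_halves_nonneg: "0 \<le> psi 6 (5/2)"
  using ln_5_halves_le by (simp add: psi_def power2_eq_square)

lemma psi_half_nonneg:
  assumes "8 \<le> N"
  shows "0 \<le> psi N (N/2)"
proof -
  define k where "k = N/2"
  have "4 \<le> k" using assms by (simp add: k_def)
  have "ln k = ln 4 + ln (k/4)" using \<open>4 \<le> k\<close> by (simp add: ln_div)
  also have "ln (k/4) \<le> k/4 - 1" using \<open>4 \<le> k\<close> by (intro ln_le_minus_one) simp
  finally have "ln k \<le> (k - 1)/2" using ln_4_le \<open>4 \<le> k\<close> by simp
  have "psi N (N/2) = ((k - 1)/k) * ((k - 1)/2 - ln k)"
    using \<open>4 \<le> k\<close> by (simp add: psi_def k_def field_simps power2_eq_square)
  also have "\<dots> \<ge> 0" using \<open>4 \<le> k\<close> \<open>ln k \<le> (k - 1)/2\<close> by (intro mult_nonneg_nonneg) auto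
  finally show ?thesis .
qed

lemma sum_mset_lower_bound_if_psi_nonneg:
  fixes Y :: "real multiset"
  assumes "\<forall>y\<in>#Y. 0 < y \<and> 0 \<le> psi (size Y) y" and "1 \<le> prod_mset Y" and "2 \<le> size Y"
  shows "real (size Y) - 1 + (\<Sum>y\<in>#Y. y\<^sup>2) / size Y \<le> sum_mset Y"
proof -
  define N where "N = real (size Y)"
  have "0 < N" using assms(3) by (simp add: N_def)
  have sum_psi: "(\<Sum>y\<in>#Y. psi N y) =
      sum_mset Y - (\<Sum>y\<in>#Y. y\<^sup>2) / N - size Y * (1 - 1/N) - (1 - 2/N) * (\<Sum>y\<in>#Y. ln y)"
    by (induction Y) (simp_all add: psi_def algebra_simps add_divide_distrib diff_divide_distrib)
  have "(\<Sum>y\<in>#Y. 0) \<le> (\<Sum>y\<in>#Y. psi N y)" using assms(1) unfolding N_def by (intro sum_mset_mono) auto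
  then have "0 \<le> (\<Sum>y\<in>#Y. psi N y)" by simp
  moreover have "0 \<le> (1 - 2/N) * (\<Sum>y\<in>#Y. ln y)"
    using assms N_def ln_prod_mset[of Y] ln_ge_zero[OF assms(2)] by (intro mult_nonneg_nonneg) (auto simp: field_simps)
  moreover have "size Y * (1 - 1/N) = N - 1"
    using \<open>0 < N\<close> unfolding N_def[symmetric] by (simp add: field_simps)
  ultimately show ?thesis unfolding N_def[symmetric] sum_psi by linarith
qed

section \<open>Spectra of complex square matrices\<close>

definition trace :: "'a::comm_ring_1 mat \<Rightarrow> 'a" where
  "trace A = (\<Sum>i<dim_row A. A $$ (i, i))"

lemma trace_mult_comm:
  assumes "A \<in> carrier_mat n m" and "B \<in> carrier_mat m n"
  shows "trace (A * B) = trace (B * A)"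
proof -
  have "trace (A * B) = (\<Sum>i<n. \<Sum>k<m. A $$ (i, k) * B $$ (k, i))"
    using assms unfolding trace_def by (auto simp: scalar_prod_def lessThan_atLeast0 intro!: sum.cong)
  also have "\<dots> = (\<Sum>k<m. \<Sum>i<n. B $$ (k, i) * A $$ (i, k))"
    by (subst sum.swap) (simp add: mult.commute)
  also have "\<dots> = trace (B * A)"
    using assms unfolding trace_def by (auto simp: scalar_prod_def lessThan_atLeast0 intro!: sum.cong)
  finally show ?thesis .
qed

lemma trace_square_upper_triangular:
  assumes "B \<in> carrier_mat n n" and "upper_triangular B"
  shows "trace (B * B) = (\<Sum>i<n. (B $$ (i, i))\<^sup>2)"
  unfolding trace_def
proof (rule sum.cong)
  fix i assume "i \<in> {..<n}"
  then have i: "i < n" by simp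
  have "(B * B) $$ (i, i) = (\<Sum>k\<in>{0..<n}. B $$ (i, k) * B $$ (k, i))"
    using assms(1) i by (simp add: scalar_prod_def)
  also have "\<dots> = (\<Sum>k\<in>{i}. B $$ (i, k) * B $$ (k, i))"
  proof (rule sum.mono_neutral_right)
    show "\<forall>k\<in>{0..<n} - {i}. B $$ (i, k) * B $$ (k, i) = 0"
    proof
      fix k assume k: "k \<in> {0..<n} - {i}"
      show "B $$ (i, k) * B $$ (k, i) = 0"
      proof (cases "k < i")
        case True
        then show ?thesis using assms i unfolding upper_triangular_def by auto
      next
        case False
        then have "i < k" using k by auto
        then show ?thesis using assms k unfolding upper_triangular_def by auto
      qed
    qed
  qed (use i in auto)
  finally show "(B * B) $$ (i, i) = (B $$ (i, i))\<^sup>2" by (simp add: power2_eq_square)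
qed (use assms(1) in simp)

lemma proots_prod_list_linear_factors:
  "proots (\<Prod>a\<leftarrow>as. [:- a, 1:]) = mset (as :: 'a :: idom list)"
proof (induction as)
  case (Cons a as)
  have "proots (\<Prod>x\<leftarrow>a # as. [:- x, 1:]) = proots ([:- a, 1:] * (\<Prod>x\<leftarrow>as. [:- x, 1:]))"
    by simp
  also have "\<dots> = proots [:- a, 1:] + proots (\<Prod>x\<leftarrow>as. [:- x, 1:])"
    by (rule proots_mult) (auto simp: prod_list_zero_iff)
  finally show ?case using Cons.IH proots_linear_factor[of "- a"] by simp
qed simp

lemma schur_form_char_poly:
  fixes A :: "complex mat"
  assumes "A \<in> carrier_mat n n"
  obtains B P Q where "similar_mat_wit A B P Q" and "upper_triangular B"
    and "B \<in> carrier_mat n n" and "mset (diag_mat B) = proots (char_poly A)"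
proof -
  obtain as where char_poly: "char_poly A = (\<Prod>a\<leftarrow>as. [:- a, 1:])"
    using char_poly_factorized[OF assms] by blast
  obtain B P Q where "schur_decomposition A as = (B, P, Q)" by (cases "schur_decomposition A as")
  from schur_decomposition[OF assms char_poly this]
  have "similar_mat_wit A B P Q" "upper_triangular B" "diag_mat B = as" by auto
  moreover from \<open>similar_mat_wit A B P Q\<close> have "B \<in> carrier_mat n n"
    using assms unfolding similar_mat_wit_def Let_def by auto
  ultimately show ?thesis
    using that char_poly proots_prod_list_linear_factors by metis
qed

lemma size_proots_char_poly:
  fixes A :: "complex mat"
  assumes "A \<in> carrier_mat n n"
  shows "size (proots (char_poly A)) = n"
proof -
  obtain B P Q where "B \<in> carrier_mat n n" "mset (diag_mat B) = proots (char_poly A)"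
    using schur_form_char_poly[OF assms] .
  then show ?thesis by (metis size_mset carrier_matD(1) diag_mat_def length_map length_upt minus_nat.diff_0)
qed

lemma det_eq_prod_proots_char_poly:
  fixes A :: "complex mat"
  assumes "A \<in> carrier_mat n n"
  shows "det A = prod_mset (proots (char_poly A))"
proof -
  obtain B P Q where sim: "similar_mat_wit A B P Q" and "upper_triangular B"
    and B: "B \<in> carrier_mat n n" and diag: "mset (diag_mat B) = proots (char_poly A)"
    using schur_form_char_poly[OF assms] .
  from sim assms have P: "P \<in> carrier_mat n n" and Q: "Q \<in> carrier_mat n n"
    and "P * Q = 1\<^sub>m n" and "A = P * B * Q"
    unfolding similar_mat_wit_def Let_def by auto
  then have "det A = det P * det B * det Q"
    using B by (simp add: det_mult[of _ n])
  also have "\<dots> = det B * det (P * Q)"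
    using P Q by (simp add: det_mult[of _ n])
  also have "\<dots> = prod_list (diag_mat B)"
    using det_upper_triangular[OF \<open>upper_triangular B\<close> B] \<open>P * Q = 1\<^sub>m n\<close> by simp
  finally show ?thesis by (simp add: diag[symmetric] prod_mset_prod_list)
qed

lemma trace_square_eq_sum_proots_char_poly:
  fixes A :: "complex mat"
  assumes "A \<in> carrier_mat n n"
  shows "trace (A * A) = (\<Sum>a\<in>#proots (char_poly A). a\<^sup>2)"
proof -
  obtain B P Q where sim: "similar_mat_wit A B P Q" and "upper_triangular B"
    and B: "B \<in> carrier_mat n n" and diag: "mset (diag_mat B) = proots (char_poly A)"
    using schur_form_char_poly[OF assms] .
  from sim assms have P: "P \<in> carrier_mat n n" and Q: "Q \<in> carrier_mat n n"
    and "Q * P = 1\<^sub>m n"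
    unfolding similar_mat_wit_def Let_def by auto
  have "A * A = A ^\<^sub>m 2" using assms by (simp add: numeral_2_eq_2)
  also have "\<dots> = P * B ^\<^sub>m 2 * Q" by (rule similar_mat_wit_pow_id[OF sim])
  also have "B ^\<^sub>m 2 = B * B" using B by (simp add: numeral_2_eq_2)
  finally have "trace (A * A) = trace (P * ((B * B) * Q))"
    using B P Q by (simp add: assoc_mult_mat[of _ n n _ n _ n])
  also have "\<dots> = trace (((B * B) * Q) * P)"
    using B P Q by (intro trace_mult_comm) auto
  also have "\<dots> = trace (B * B)"
    using B P Q \<open>Q * P = 1\<^sub>m n\<close> by (simp add: assoc_mult_mat[of _ n n _ n _ n])
  also have "\<dots> = (\<Sum>i<n. (B $$ (i, i))\<^sup>2)"
    by (rule trace_square_upper_triangular[OF B \<open>upper_triangular B\<close>])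
  also have "\<dots> = (\<Sum>b\<leftarrow>diag_mat B. b\<^sup>2)"
    using B by (simp add: diag_mat_def interv_sum_list_conv_sum_set_nat lessThan_atLeast0)
  finally show ?thesis by (metis diag mset_map sum_mset_sum_list)
qed

lemma eigenvalue_iff_mem_proots_char_poly:
  fixes A :: "complex mat"
  assumes "A \<in> carrier_mat n n"
  shows "eigenvalue A a \<longleftrightarrow> a \<in># proots (char_poly A)"
proof -
  have "char_poly A \<noteq> 0" using degree_monic_char_poly[OF assms] by auto
  then show ?thesis using eigenvalue_root_char_poly[OF assms] by simp
qed

lemma eigenvalue_real_if_hermitian:
  fixes A :: "complex mat"
  assumes A: "A \<in> carrier_mat n n" and hermitian: "\<And>i j. i < n \<Longrightarrow> j < n \<Longrightarrow> A $$ (j, i) = cnj (A $$ (i, j))"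
    and "eigenvalue A a"
  shows "a \<in> \<real>"
proof -
  obtain v where v: "v \<in> carrier_vec n" "v \<noteq> 0\<^sub>v n" "A *\<^sub>v v = a \<cdot>\<^sub>v v"
    using \<open>eigenvalue A a\<close> A unfolding eigenvalue_def eigenvector_def by auto
  have row: "(\<Sum>j<n. A $$ (i, j) * v $ j) = a * v $ i" if "i < n" for i
  proof -
    have "(A *\<^sub>v v) $ i = (\<Sum>j<n. A $$ (i, j) * v $ j)"
      using A v(1) that by (auto simp: scalar_prod_def lessThan_atLeast0 intro!: sum.cong)
    then show ?thesis using v(3) v(1) that by simp
  qed
  define T where "T = (\<Sum>i<n. (cmod (v $ i))\<^sup>2)"
  text \<open>The Hermitian form \<open>v\<^sup>* A v\<close> equals \<open>a |v|\<^sup>2\<close> and is its own conjugate.\<close>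
  define R where "R = (\<Sum>i<n. \<Sum>j<n. cnj (v $ i) * A $$ (i, j) * v $ j)"
  have "R = (\<Sum>i<n. cnj (v $ i) * (\<Sum>j<n. A $$ (i, j) * v $ j))"
    unfolding R_def by (simp add: sum_distrib_left mult.assoc)
  also have "\<dots> = (\<Sum>i<n. a * (cnj (v $ i) * v $ i))" using row by (simp add: mult_ac)
  also have "\<dots> = a * of_real T"
  proof -
    have "cnj z * z = of_real ((cmod z)\<^sup>2)" for z
      using complex_norm_square[of z] by (simp add: mult.commute)
    then show ?thesis unfolding T_def by (simp add: sum_distrib_left)
  qed
  finally have R: "R = a * of_real T" .
  have "cnj R = (\<Sum>i<n. \<Sum>j<n. v $ i * A $$ (j, i) * cnj (v $ j))"
    unfolding R_def by (auto simp: cnj_sum hermitian[symmetric] intro!: sum.cong)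
  also have "\<dots> = R"
    unfolding R_def by (subst sum.swap) (simp add: mult_ac)
  finally have "R \<in> \<real>" by (simp add: Reals_cnj_iff)
  moreover have "0 < T"
  proof -
    obtain i where "i < n" "v $ i \<noteq> 0" using v(1,2) by (metis carrier_vecD eq_vecI index_zero_vec)
    then have "0 < (cmod (v $ i))\<^sup>2" by simp
    also have "\<dots> \<le> T" unfolding T_def using \<open>i < n\<close> by (intro member_le_sum) auto
    finally show ?thesis .
  qed
  ultimately have "R / of_real T \<in> \<real>" by simp
  moreover have "a = R / of_real T" using R \<open>0 < T\<close> by simp
  ultimately show ?thesis by simp
qed

lemma eigenvalue_uminus_if_bipartite_pattern:
  fixes A :: "'a::comm_ring_1 mat"
  assumes A: "A \<in> carrier_mat n n"
    and pattern: "\<And>i j. i < n \<Longrightarrow> j < n \<Longrightarrow> (i \<in> X \<longleftrightarrow> j \<in> X) \<Longrightarrow> A $$ (i, j) = 0"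
    and "eigenvalue A a"
  shows "eigenvalue A (- a)"
proof -
  obtain v where v: "v \<in> carrier_vec n" "v \<noteq> 0\<^sub>v n" "A *\<^sub>v v = a \<cdot>\<^sub>v v"
    using \<open>eigenvalue A a\<close> A unfolding eigenvalue_def eigenvector_def by auto
  define sign where "sign i = (if i \<in> X then 1 else - 1 :: 'a)" for i
  define w where "w = vec n (\<lambda>i. sign i * v $ i)"
  have "A *\<^sub>v w = (- a) \<cdot>\<^sub>v w"
  proof (rule eq_vecI)
    fix i assume "i < dim_vec ((- a) \<cdot>\<^sub>v w)"
    then have i: "i < n" by (simp add: w_def)
    have "(A *\<^sub>v w) $ i = (\<Sum>j<n. A $$ (i, j) * (sign j * v $ j))"
      using A i by (auto simp: w_def scalar_prod_def lessThan_atLeast0 intro!: sum.cong)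
    also have "\<dots> = - sign i * (\<Sum>j<n. A $$ (i, j) * v $ j)"
      unfolding sum_distrib_left using pattern i by (intro sum.cong) (auto simp: sign_def)
    also have "(\<Sum>j<n. A $$ (i, j) * v $ j) = (A *\<^sub>v v) $ i"
      using A v(1) i by (auto simp: scalar_prod_def lessThan_atLeast0 intro!: sum.cong)
    finally show "(A *\<^sub>v w) $ i = ((- a) \<cdot>\<^sub>v w) $ i" using i v by (simp add: w_def)
  qed (use A in \<open>simp add: w_def\<close>)
  moreover have "w \<noteq> 0\<^sub>v n"
  proof
    assume "w = 0\<^sub>v n"
    have "v $ i = 0" if "i < n" for i
    proof -
      have "sign i * sign i = 1" by (simp add: sign_def)
      then have "v $ i = sign i * w $ i" using that by (simp add: w_def mult.assoc[symmetric])
      then show ?thesis using \<open>w = 0\<^sub>v n\<close> that by simp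
    qed
    then show False using v(1,2) by (metis carrier_vecD eq_vecI index_zero_vec)
  qed
  moreover have "w \<in> carrier_vec n" by (simp add: w_def)
  ultimately show ?thesis using A unfolding eigenvalue_def eigenvector_def by auto
qed

lemma norm_prod_mset:
  fixes M :: "'a::real_normed_field multiset"
  shows "norm (prod_mset M) = (\<Prod>x\<in>#M. norm x)"
  by (induction M) (simp_all add: norm_mult)

lemma det_nonzero_obtains_permutation:
  fixes A :: "'a::comm_ring_1 mat"
  assumes "A \<in> carrier_mat n n" and "det A \<noteq> 0"
  obtains p where "p permutes {0..<n}" and "\<And>i. i < n \<Longrightarrow> A $$ (i, p i) \<noteq> 0"
proof -
  have "\<exists>p. p permutes {0..<n} \<and> (\<forall>i<n. A $$ (i, p i) \<noteq> 0)"
  proof (rule ccontr)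
    assume none: "\<not> ?thesis"
    have "det A = (\<Sum>p\<in>{p. p permutes {0..<n}}. signof p * (\<Prod>i=0..<n. A $$ (i, p i)))"
      by (rule det_def'[OF assms(1)])
    also have "\<dots> = 0"
    proof (rule sum.neutral, rule ballI)
      fix p assume "p \<in> {p. p permutes {0..<n}}"
      then obtain i where "i < n" "A $$ (i, p i) = 0" using none by blast
      then have "(\<Prod>i=0..<n. A $$ (i, p i)) = 0" by (intro prod_zero) auto
      then show "signof p * (\<Prod>i=0..<n. A $$ (i, p i)) = 0" by simp
    qed
    finally show False using assms(2) by simp
  qed
  then show ?thesis using that by blast
qed

section \<open>Graphs and their adjacency spectra\<close>

lemma adj_mat_carrier [simp]: "adj_mat n E \<in> carrier_mat n n"
  and adj_mat_dim [simp]: "dim_row (adj_mat n E) = n" "dim_col (adj_mat n E) = n"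
  by (simp_all add: adj_mat_def)

lemma adj_mat_index [simp]: "i < n \<Longrightarrow> j < n \<Longrightarrow> adj_mat n E $$ (i, j) = (if E i j then 1 else 0)"
  by (simp add: adj_mat_def)

lemma det_adj_mat_Ints: "det (adj_mat n E) \<in> \<int>"
proof -
  have "adj_mat n E = map_mat of_int (mat n n (\<lambda>(i, j). if E i j then 1 else 0))"
    by (rule eq_matI) (auto simp: adj_mat_def)
  then show ?thesis by (simp add: of_int_hom.hom_det)
qed

locale finite_simple_graph =
  fixes n :: nat and E :: "nat \<Rightarrow> nat \<Rightarrow> bool"
  assumes simple: "simple_graph n E"
begin

lemma edge_less: "E i j \<Longrightarrow> i < n \<and> j < n"
  and edge_sym: "E i j \<Longrightarrow> E j i"
  and edge_irrefl: "\<not> E i i"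
  using simple unfolding simple_graph_def by blast+

definition neighbours :: "nat \<Rightarrow> nat set" where
  "neighbours i = {j. j < n \<and> E i j}"

lemma card_arcs: "card {(i, j). E i j} = 2 * num_edges n E"
proof -
  let ?S = "{(i, j). i < j \<and> j < n \<and> E i j}"
  have "{(i, j). E i j} = ?S \<union> prod.swap ` ?S"
    using edge_less edge_sym edge_irrefl by (auto simp: image_iff) (metis linorder_neqE_nat)
  moreover have "finite ?S" by (rule finite_subset[of _ "{0..<n} \<times> {0..<n}"]) auto
  moreover have "?S \<inter> prod.swap ` ?S = {}" by auto
  ultimately show ?thesis unfolding num_edges_def by (simp add: card_Un_disjoint card_image)
qed

lemma trace_adj_mat_square: "trace (adj_mat n E * adj_mat n E) = 2 * num_edges n E"
proof -
  have "trace (adj_mat n E * adj_mat n E) = (\<Sum>i<n. \<Sum>j<n. if E i j then 1 else 0)"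
    unfolding trace_def using edge_sym
    by (auto simp: scalar_prod_def lessThan_atLeast0 intro!: sum.cong)
  also have "\<dots> = (\<Sum>i<n. real (card (neighbours i)))"
    by (simp add: neighbours_def sum.If_cases lessThan_def Collect_conj_eq[symmetric] conj_commute)
  also have "\<dots> = card (SIGMA i:{..<n}. neighbours i)"
    by (simp add: card_SigmaI neighbours_def)
  also have "(SIGMA i:{..<n}. neighbours i) = {(i, j). E i j}"
    using edge_less by (auto simp: neighbours_def)
  finally show ?thesis by (simp add: card_arcs)
qed

abbreviation eigenvalues :: "complex multiset" where
  "eigenvalues \<equiv> proots (char_poly (map_mat complex_of_real (adj_mat n E)))"

abbreviation abs_eigenvalues :: "real multiset" where
  "abs_eigenvalues \<equiv> image_mset cmod eigenvalues"

lemma energy_eq_sum_abs_eigenvalues: "energy n E = sum_mset abs_eigenvalues"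
  by (simp add: energy_def)

lemma size_eigenvalues: "size eigenvalues = n"
  by (simp add: size_proots_char_poly[of _ n])

lemma mem_eigenvalues_iff: "a \<in># eigenvalues \<longleftrightarrow> eigenvalue (map_mat complex_of_real (adj_mat n E)) a"
  by (simp add: eigenvalue_iff_mem_proots_char_poly[of _ n])

lemma eigenvalue_real: "a \<in># eigenvalues \<Longrightarrow> a \<in> \<real>"
  unfolding mem_eigenvalues_iff
  by (rule eigenvalue_real_if_hermitian[of _ n]) (auto dest: edge_sym)

lemma prod_eigenvalues: "prod_mset eigenvalues = of_real (det (adj_mat n E))"
  by (simp add: det_eq_prod_proots_char_poly[of _ n, symmetric] of_real_hom.hom_det)

lemma sum_squares_abs_eigenvalues: "(\<Sum>z\<in>#abs_eigenvalues. z\<^sup>2) = 2 * num_edges n E"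
proof -
  let ?A = "map_mat complex_of_real (adj_mat n E)"
  have "complex_of_real ((cmod a)\<^sup>2) = a\<^sup>2" if "a \<in># eigenvalues" for a
    using eigenvalue_real[OF that] by (auto elim!: Reals_cases simp flip: of_real_power)
  then have "complex_of_real (\<Sum>z\<in>#abs_eigenvalues. z\<^sup>2) = (\<Sum>a\<in>#eigenvalues. a\<^sup>2)"
    by (simp add: of_real_hom.hom_sum_mset multiset.map_comp o_def cong: image_mset_cong)
  also have "\<dots> = trace (?A * ?A)"
    by (simp add: trace_square_eq_sum_proots_char_poly[of _ n])
  also have "?A * ?A = map_mat complex_of_real (adj_mat n E * adj_mat n E)"
    by (simp add: of_real_hom.mat_hom_mult[of _ n n _ n])
  also have "trace \<dots> = complex_of_real (trace (adj_mat n E * adj_mat n E))"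
    by (simp add: trace_def)
  finally have "complex_of_real (\<Sum>z\<in>#abs_eigenvalues. z\<^sup>2) = complex_of_real (2 * num_edges n E)"
    by (simp add: trace_adj_mat_square)
  then show ?thesis by (simp only: of_real_eq_iff)
qed

end

locale bipartite_graph = finite_simple_graph +
  fixes X :: "nat set"
  assumes side_subset: "X \<subseteq> {0..<n}" and edge_crosses: "E i j \<Longrightarrow> i \<in> X \<longleftrightarrow> j \<notin> X"
begin

abbreviation Y :: "nat set" where
  "Y \<equiv> {0..<n} - X"

lemma finite_sides: "finite X" "finite Y"
  using side_subset finite_subset by auto

lemma card_sides_sum: "card X + card Y = n"
proof -
  have "card X \<le> n" using card_mono[OF finite_atLeastLessThan side_subset] by simp
  then show ?thesis using side_subset finite_sides by (simp add: card_Diff_subset)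
qed

lemma neighbours_subset: "x \<in> X \<Longrightarrow> neighbours x \<subseteq> Y"
  by (auto simp: neighbours_def dest: edge_crosses)

lemma num_edges_eq_sum_card_neighbours: "num_edges n E = (\<Sum>x\<in>X. card (neighbours x))"
proof -
  let ?F = "SIGMA x:X. neighbours x"
  have "{(i, j). E i j} = ?F \<union> prod.swap ` ?F"
  proof (intro equalityI subsetI)
    fix p assume "p \<in> {(i, j). E i j}"
    then obtain i j where p: "p = (i, j)" and "E i j" by blast
    then have "i < n" "j < n" "E j i" using edge_less edge_sym by auto
    show "p \<in> ?F \<union> prod.swap ` ?F"
    proof (cases "i \<in> X")
      case True
      then have "(i, j) \<in> ?F" using \<open>E i j\<close> \<open>j < n\<close> by (simp add: neighbours_def)
      then show ?thesis using p by blast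
    next
      case False
      then have "(j, i) \<in> ?F"
        using edge_crosses[OF \<open>E i j\<close>] \<open>E j i\<close> \<open>i < n\<close> by (simp add: neighbours_def)
      then show ?thesis using p by (auto intro: rev_image_eqI)
    qed
  next
    fix p assume "p \<in> ?F \<union> prod.swap ` ?F"
    then show "p \<in> {(i, j). E i j}" using edge_sym by (auto simp: neighbours_def)
  qed
  moreover have "?F \<inter> prod.swap ` ?F = {}"
  proof (rule equals0I)
    fix p assume "p \<in> ?F \<inter> prod.swap ` ?F"
    then obtain i j where "i \<in> X" "j \<in> neighbours i" "j \<in> X" by auto
    then show False using neighbours_subset by auto
  qed
  moreover have "finite ?F" using finite_sides by (auto simp: neighbours_def)
  ultimately have "2 * num_edges n E = 2 * card ?F"
    by (simp add: card_arcs[symmetric] card_Un_disjoint card_image)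
  then show ?thesis by (simp add: card_SigmaI finite_sides neighbours_def)
qed

lemma num_edges_le_card_mult: "num_edges n E \<le> card X * card Y"
proof -
  have "(\<Sum>x\<in>X. card (neighbours x)) \<le> (\<Sum>x\<in>X. card Y)"
    using neighbours_subset finite_sides by (intro sum_mono card_mono) auto
  then show ?thesis by (simp add: num_edges_eq_sum_card_neighbours)
qed

lemma eigenvalue_uminus: "a \<in># eigenvalues \<Longrightarrow> - a \<in># eigenvalues"
  unfolding mem_eigenvalues_iff
  by (rule eigenvalue_uminus_if_bipartite_pattern[of _ n X]) (auto dest: edge_crosses)

lemma cmod_pair_subset_abs_eigenvalues:
  assumes "a \<in># eigenvalues" and "a \<noteq> 0"
  shows "{#cmod a, cmod a#} \<subseteq># abs_eigenvalues"
proof -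
  have "- a \<in># eigenvalues - {#a#}"
    using eigenvalue_uminus[OF assms(1)] assms(2) by (simp add: in_diff_count)
  then have "{#a, - a#} \<subseteq># eigenvalues" using assms(1) by (simp add: insert_subset_eq_iff)
  from image_mset_subseteq_mono[OF this, of cmod] show ?thesis by simp
qed

lemma obtains_unique_non_edge:
  assumes "num_edges n E + 1 = card X * card Y"
  obtains x0 y0 where "x0 \<in> X" and "y0 \<in> Y" and "\<not> E x0 y0"
    and "\<And>x y. x \<in> X \<Longrightarrow> y \<in> Y \<Longrightarrow> (x, y) \<noteq> (x0, y0) \<Longrightarrow> E x y"
proof -
  let ?C = "{(x, y) \<in> X \<times> Y. E x y}"
  have "?C = (SIGMA x:X. neighbours x)" using neighbours_subset by (auto simp: neighbours_def)
  then have "card ?C = num_edges n E"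
    using finite_sides by (simp add: num_edges_eq_sum_card_neighbours card_SigmaI neighbours_def)
  moreover have sub: "?C \<subseteq> X \<times> Y" by blast
  moreover have "finite ?C" using finite_subset[OF sub] finite_sides by blast
  ultimately have "card (X \<times> Y - ?C) = card X * card Y - num_edges n E"
    by (simp add: card_Diff_subset card_cartesian_product)
  then have "card (X \<times> Y - ?C) = 1" using assms by simp
  then obtain q where "X \<times> Y - ?C = {q}" by (rule card_1_singletonE)
  moreover obtain x0 y0 where "q = (x0, y0)" by fastforce
  ultimately have missing: "X \<times> Y - ?C = {(x0, y0)}" by simp
  then have "(x0, y0) \<in> X \<times> Y - ?C" by simp
  moreover have "E x y" if "x \<in> X" "y \<in> Y" "(x, y) \<noteq> (x0, y0)" for x y
  proof -
    have "(x, y) \<notin> X \<times> Y - ?C" using missing that(3) by simp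
    then show ?thesis using that(1,2) by simp
  qed
  ultimately show ?thesis using that by blast
qed

lemma isomorphic_P4:
  assumes "card X = 2" and "card Y = 2" and "num_edges n E = 3"
  shows "isomorphic n E 4 P4_edge"
proof -
  have "n = 4" using card_sides_sum assms by simp
  obtain x0 y0 where "x0 \<in> X" "y0 \<in> Y" "\<not> E x0 y0"
    and cross: "\<And>x y. x \<in> X \<Longrightarrow> y \<in> Y \<Longrightarrow> (x, y) \<noteq> (x0, y0) \<Longrightarrow> E x y"
    using obtains_unique_non_edge assms by auto
  have other: "\<exists>b. A = {a, b} \<and> b \<in> A \<and> b \<noteq> a" if "card A = 2" "a \<in> A" for A :: "nat set" and a
  proof -
    have "card (A - {a}) = 1" using that by (simp add: card_Diff_singleton)
    then obtain b where "A - {a} = {b}" by (rule card_1_singletonE)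
    then show ?thesis using \<open>a \<in> A\<close> by blast
  qed
  obtain x1 where X: "X = {x0, x1}" and "x1 \<in> X" "x1 \<noteq> x0"
    using other[OF assms(1) \<open>x0 \<in> X\<close>] by blast
  obtain y1 where Y: "Y = {y0, y1}" and "y1 \<in> Y" "y1 \<noteq> y0"
    using other[OF assms(2) \<open>y0 \<in> Y\<close>] by blast
  have "{0..<n} = X \<union> Y" using side_subset by blast
  also have "\<dots> = {x0, x1} \<union> {y0, y1}" by (simp only: Y) (simp only: X)
  finally have vertices: "{0..<n} = {x0, x1, y0, y1}" by auto
  have "y0 \<notin> X" "y1 \<notin> X" using \<open>y0 \<in> Y\<close> \<open>y1 \<in> Y\<close> by blast+
  then have distinct: "distinct [x0, x1, y0, y1]"
    using \<open>x0 \<in> X\<close> \<open>x1 \<in> X\<close> \<open>x1 \<noteq> x0\<close> \<open>y1 \<noteq> y0\<close> by auto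
  have same_side: "\<not> E a b" if "a \<in> X \<longleftrightarrow> b \<in> X" for a b using edge_crosses that by blast
  have "E x0 y1" "E x1 y0" "E x1 y1"
    using cross \<open>x0 \<in> X\<close> \<open>x1 \<in> X\<close> \<open>y0 \<in> Y\<close> \<open>y1 \<in> Y\<close> \<open>x1 \<noteq> x0\<close> \<open>y1 \<noteq> y0\<close> by auto
  then have edges: "E x0 y1" "E y1 x0" "E x1 y0" "E y0 x1" "E x1 y1" "E y1 x1"
    by (auto intro: edge_sym)
  have non_edges: "\<not> E x0 y0" "\<not> E y0 x0"
    using \<open>\<not> E x0 y0\<close> edge_sym by blast+
  text \<open>The path is \<open>y0 - x1 - y1 - x0\<close>.\<close>
  define f where "f i = (if i = y0 then 0 else if i = x1 then 1 else if i = y1 then 2 else 3 :: nat)" for i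
  have f: "f y0 = 0" "f x1 = 1" "f y1 = 2" "f x0 = 3" using distinct by (auto simp: f_def)
  have "{0..<4 :: nat} = {3, 1, 0, 2}" by auto
  then have "bij_betw f {0..<n} {0..<4}"
    unfolding bij_betw_def vertices using distinct by (simp add: f)
  moreover have "\<forall>i\<in>{0..<n}. \<forall>j\<in>{0..<n}. E i j \<longleftrightarrow> P4_edge (f i) (f j)"
    unfolding vertices using \<open>x0 \<in> X\<close> \<open>x1 \<in> X\<close> \<open>y0 \<notin> X\<close> \<open>y1 \<notin> X\<close>
    by (simp add: f P4_edge_def edges non_edges same_side)
  ultimately show ?thesis unfolding isomorphic_def \<open>n = 4\<close> by blast
qed

end

locale nonsingular_bipartite_graph = bipartite_graph +
  assumes nonsingular: "det (adj_mat n E) \<noteq> 0"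
begin

lemma card_sides_eq: "card Y = card X"
proof -
  obtain p where p: "p permutes {0..<n}" and nonzero: "\<And>i. i < n \<Longrightarrow> adj_mat n E $$ (i, p i) \<noteq> 0"
    using det_nonzero_obtains_permutation[OF adj_mat_carrier nonsingular] by blast
  have matched: "E i (p i)" if "i < n" for i
  proof -
    have "p i < n" using permutes_in_image[OF p] that by simp
    moreover have "adj_mat n E $$ (i, p i) \<noteq> 0" using nonzero that .
    ultimately show ?thesis using that by (simp split: if_splits)
  qed
  have inj: "inj_on p A" for A using permutes_inj[OF p] by (rule inj_on_subset) simp
  have "p ` X \<subseteq> Y"
  proof (rule image_subsetI)
    fix x assume "x \<in> X"
    then have "E x (p x)" using matched side_subset by auto
    then show "p x \<in> Y" using edge_crosses[OF \<open>E x (p x)\<close>] edge_less \<open>x \<in> X\<close> by auto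
  qed
  moreover have "p ` Y \<subseteq> X"
  proof (rule image_subsetI)
    fix y assume "y \<in> Y"
    then have "E y (p y)" using matched by auto
    then show "p y \<in> X" using edge_crosses \<open>y \<in> Y\<close> by blast
  qed
  ultimately show ?thesis using card_inj_on_le[OF inj] finite_sides by (metis le_antisym)
qed

lemma n_eq_twice_card_side: "n = 2 * card X"
  using card_sides_sum card_sides_eq by simp

lemma full_neighbourhood_unique:
  assumes "x \<in> X" "x' \<in> X" and "neighbours x = Y" "neighbours x' = Y"
  shows "x = x'"
proof (rule ccontr)
  assume "x \<noteq> x'"
  have "x < n" "x' < n" using assms(1,2) side_subset by auto
  have "row (adj_mat n E) x = row (adj_mat n E) x'"
    using assms(3,4) \<open>x < n\<close> \<open>x' < n\<close> by (intro eq_vecI) (auto simp: neighbours_def set_eq_iff)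
  then have "det (adj_mat n E) = 0"
    using \<open>x \<noteq> x'\<close> \<open>x < n\<close> \<open>x' < n\<close> by (intro det_identical_rows[of _ n x x']) auto
  with nonsingular show False ..
qed

lemma num_edges_le: "num_edges n E \<le> card X * (card X - 1) + 1"
proof -
  let ?k = "card X"
  define full where "full = {x \<in> X. neighbours x = Y}"
  have "finite full" using finite_sides by (simp add: full_def)
  then have "card full \<le> Suc 0"
    using full_neighbourhood_unique by (simp add: card_le_Suc0_iff_eq full_def)
  have "card (neighbours x) \<le> ?k - 1 + (if x \<in> full then 1 else 0)" if "x \<in> X" for x
  proof (cases "x \<in> full")
    case True
    then show ?thesis using card_sides_eq by (simp add: full_def)
  next
    case False
    then have "neighbours x \<subset> Y" using neighbours_subset \<open>x \<in> X\<close> by (auto simp: full_def)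
    then have "card (neighbours x) < card Y" using finite_sides by (intro psubset_card_mono) auto
    then show ?thesis using False card_sides_eq by simp
  qed
  then have "num_edges n E \<le> (\<Sum>x\<in>X. ?k - 1 + (if x \<in> full then 1 else 0))"
    unfolding num_edges_eq_sum_card_neighbours by (rule sum_mono)
  also have "\<dots> = ?k * (?k - 1) + card full"
    using finite_sides by (simp add: sum.distrib full_def sum.inter_filter[symmetric])
  finally show ?thesis using \<open>card full \<le> Suc 0\<close> by simp
qed

lemma three_le_card_side:
  assumes "\<not> isomorphic n E 4 P4_edge" and "n < 2 * num_edges n E"
  shows "3 \<le> card X"
proof (rule ccontr)
  assume "\<not> 3 \<le> card X"
  then consider "card X = 0" | "card X = 1" | "card X = 2" by linarith
  then show False
  proof cases
    case 1
    then show False using num_edges_le_card_mult assms(2) by simp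
  next
    case 2
    then show False using num_edges_le n_eq_twice_card_side assms(2) by simp
  next
    case 3
    then have "num_edges n E = 3" using num_edges_le n_eq_twice_card_side assms(2) by simp
    then show False using isomorphic_P4 3 card_sides_eq assms(1) by simp
  qed
qed

lemma abs_eigenvalues_pos: "z \<in># abs_eigenvalues \<Longrightarrow> 0 < z"
proof -
  have "0 \<notin># eigenvalues"
    using nonsingular prod_eigenvalues by (simp flip: prod_mset_zero_iff)
  then show "z \<in># abs_eigenvalues \<Longrightarrow> 0 < z" by auto
qed

lemma one_le_prod_abs_eigenvalues: "1 \<le> prod_mset abs_eigenvalues"
proof -
  have "prod_mset abs_eigenvalues = \<bar>det (adj_mat n E)\<bar>"
    by (simp add: norm_prod_mset[symmetric] prod_eigenvalues)
  then show ?thesis using Ints_nonzero_abs_ge1[OF det_adj_mat_Ints nonsingular] by simp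
qed

lemma abs_eigenvalues_paired:
  assumes "z \<in># abs_eigenvalues"
  shows "{#z, z#} \<subseteq># abs_eigenvalues"
proof -
  obtain a where "a \<in># eigenvalues" and z: "z = cmod a" using assms by auto
  moreover have "a \<noteq> 0" using abs_eigenvalues_pos[OF assms] z by auto
  ultimately show ?thesis using cmod_pair_subset_abs_eigenvalues by simp
qed

lemma psi_nonneg_abs_eigenvalue:
  assumes "\<not> isomorphic n E 4 P4_edge" and "n < 2 * num_edges n E" and "z \<in># abs_eigenvalues"
  shows "0 \<le> psi n z"
proof -
  let ?k = "card X"
  have "3 \<le> ?k" using three_le_card_side[OF assms(1,2)] .
  have "0 < z" using abs_eigenvalues_pos[OF assms(3)] .
  have pair: "{#z, z#} \<subseteq># abs_eigenvalues" using abs_eigenvalues_paired[OF assms(3)] .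
  show ?thesis
  proof (cases "?k = 3")
    case True
    then have "n = 6" "num_edges n E \<le> 7" using n_eq_twice_card_side num_edges_le by auto
    then have "z \<le> 5/2"
      using paired_element_le_five_halves[OF _ one_le_prod_abs_eigenvalues _ _ pair]
        abs_eigenvalues_pos size_eigenvalues sum_squares_abs_eigenvalues by auto
    then show ?thesis using psi_nonneg[of 6 z "5/2"] psi_6_five_halves_nonneg \<open>0 < z\<close> \<open>n = 6\<close> by simp
  next
    case False
    then have "8 \<le> n" using n_eq_twice_card_side \<open>3 \<le> ?k\<close> by simp
    have "2 * z\<^sup>2 \<le> 2 * num_edges n E"
      using sum_mset_squares_ge_pair[OF pair] sum_squares_abs_eigenvalues by simp
    also have "\<dots> \<le> 2 * (?k * ?k)"
      using num_edges_le_card_mult card_sides_eq by (simp flip: of_nat_mult)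
    finally have "z\<^sup>2 \<le> (real ?k)\<^sup>2" by (simp add: power2_eq_square)
    then have "z \<le> n/2" using \<open>0 < z\<close> n_eq_twice_card_side by (simp add: power2_le_iff_abs_le)
    then show ?thesis using psi_nonneg[of n z "n/2"] psi_half_nonneg \<open>8 \<le> n\<close> \<open>0 < z\<close> by simp
  qed
qed

theorem energy_lower_bound:
  assumes "\<not> isomorphic n E 4 P4_edge"
  shows "real n - 1 + avg_degree n E \<le> energy n E"
proof (cases "2 * num_edges n E \<le> n")
  case True
  have "real n \<le> energy n E"
    using size_le_sum_mset_if_prod_ge_1[OF _ one_le_prod_abs_eigenvalues] abs_eigenvalues_pos
      size_eigenvalues energy_eq_sum_abs_eigenvalues by auto
  moreover have "avg_degree n E \<le> 1"
    using True by (cases "n = 0") (auto simp: avg_degree_def)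
  ultimately show ?thesis by linarith
next
  case False
  then have "2 \<le> n" using three_le_card_side[OF assms] n_eq_twice_card_side by linarith
  have "\<forall>z\<in>#abs_eigenvalues. 0 < z \<and> 0 \<le> psi (size abs_eigenvalues) z"
    using abs_eigenvalues_pos psi_nonneg_abs_eigenvalue[OF assms] False by (simp add: size_eigenvalues)
  then have "real (size abs_eigenvalues) - 1 + (\<Sum>z\<in>#abs_eigenvalues. z\<^sup>2) / size abs_eigenvalues
      \<le> sum_mset abs_eigenvalues"
    using \<open>2 \<le> n\<close> by (intro sum_mset_lower_bound_if_psi_nonneg one_le_prod_abs_eigenvalues)
      (simp_all add: size_eigenvalues)
  then show ?thesis
    by (simp add: size_eigenvalues sum_squares_abs_eigenvalues energy_eq_sum_abs_eigenvalues
        avg_degree_def)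
qed

end

theorem theorem2p2:
  fixes n :: nat and E :: "nat \<Rightarrow> nat \<Rightarrow> bool"
  assumes "simple_graph n E"
    and "bipartite n E"
    and "det (adj_mat n E) \<noteq> 0"
    and "\<not> isomorphic n E 4 P4_edge"
  shows "energy n E \<ge> real n - 1 + avg_degree n E"
proof -
  obtain X where "X \<subseteq> {0..<n}" and "\<forall>i j. E i j \<longrightarrow> (i \<in> X \<longleftrightarrow> j \<notin> X)"
    using assms(2) unfolding bipartite_def by blast
  then interpret nonsingular_bipartite_graph n E X
    using assms(1,3) by unfold_locales auto
  show ?thesis using energy_lower_bound[OF assms(4)] .
qed

end
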